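(* For every language $L\subseteq\Sigma^+$: if $L\in\mathtt{incl}$-$\mathtt{ESO}$-$\mathtt{HORN}$, then $(\Sigma^+\setminus L)\in LinConj$.
   Context: Fix a finite alphabet $\Sigma$. A nonempty word $w=w_1\cdots w_n$ is represented by the structure $\langle w\rangle=([1,n];(Q_s)_{s\in\Sigma},\mathtt{min},\mathtt{max},\mathtt{suc},\mathtt{pred})$ with $Q_s(i)\iff w_i=s$, $\mathtt{min}(i)\iff i=1$, $\mathtt{max}(i)\iff i=n$, $\mathtt{suc}(i)=\min(i+1,n)$, $\mathtt{pred}(i)=\max(i-1,1)$. For an integer $a$, $x+a$ denotes $\mathtt{suc}^a(x)$ if $a\ge0$ and $\mathtt{pred}^{-a}(x)$ if $a<0$; $y-b=\mathtt{pred}^b(y)$. An inclusion Horn formula is $\Phi=\exists\mathbf{R}\forall x\forall y\,\psi(x,y)$, $\mathbf{R}$ a finite set of binary relation symbols, $\psi$ a conjunction of Horn clauses over $\{(Q_s)_{s\in\Sigma},\mathtt{min},\mathtt{max},\mathtt{suc},\mathtt{pred}\}\cup\mathbf{R}\cup\{=,\le,<\}$, each of the form $x\le y\wedge\delta_1\wedge\cdots\wedge\delta_r\to\delta_0$ with $\delta_0$ an atom $R(x,y)$ ($R\in\mathbf{R}$) or $\bot$, each $\delta_i$ one of: $U(x+a)$, $\neg U(x+a)$, $U(y+a)$, $\neg U(y+a)$ for $U\in\{(Q_s)_{s\in\Sigma},\mathtt{min},\mathtt{max}\}$, $a\in\mathbb Z$; $x=y$ or $x<y$; $S(x+a,y-b)\wedge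 x+a\le y-b$ with $S\in\mathbf{R}$, $a,b\ge0$. $\mathtt{incl}$-$\mathtt{ESO}$-$\mathtt{HORN}$ is the class of languages $\{w\in\Sigma^+:\langle w\rangle\models\Phi\}$. A linear conjunctive grammar is $G=(\Sigma,N,P,S)$ with nonterminals $N$, start symbol $S\in N$, and a finite set $P$ of rules $A\to\alpha_1\&\cdots\&\alpha_k$ ($k\ge1$), each $\alpha_i\in\Sigma^*\cup\Sigma^*N\Sigma^*$. The languages $(L(A))_{A\in N}$ form the least (componentwise) solution of $L(A)=\bigcup_{(A\to\alpha_1\&\cdots\&\alpha_k)\in P}\bigcap_iL(\alpha_i)$, where $L(uBv)=uL(B)v$, $L(u)=\{u\}$ for $u,v\in\Sigma^*$, $B\in N$; $L(G)=L(S)$. $LinConj$ is the class of languages generated by such grammars. *)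

theory Defs
  imports Main
begin

text \<open>A word w of length n is viewed as the structure on positions 1..n.
  Position i carries letter w ! (i - 1).\<close>

definition suc_pos :: "nat \<Rightarrow> nat \<Rightarrow> nat" where
  "suc_pos n i = min (i + 1) n"

definition pred_pos :: "nat \<Rightarrow> nat \<Rightarrow> nat" where
  "pred_pos n i = max (i - 1) 1"

definition shift :: "nat \<Rightarrow> nat \<Rightarrow> int \<Rightarrow> nat" where
  "shift n x a = (if a \<ge> 0 then (suc_pos n ^^ nat a) x else (pred_pos n ^^ nat (- a)) x)"

definition unshift :: "nat \<Rightarrow> nat \<Rightarrow> nat \<Rightarrow> nat" where
  "unshift n y b = (pred_pos n ^^ b) y"

datatype 'a upred = Q 'a | Min | Max

datatype var = VX | VY

definition upred_holds :: "'a list \<Rightarrow> 'a upred \<Rightarrow> nat \<Rightarrow> bool" where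
  "upred_holds w U i = (case U of
       Q s \<Rightarrow> w ! (i - 1) = s
     | Min \<Rightarrow> i = 1
     | Max \<Rightarrow> i = length w)"

text \<open>Relation symbols are natural numbers (a formula only mentions finitely many).
  Body atoms:
  ULit pol U v a  : U(v+a) if pol, \<not>U(v+a) otherwise;
  EqXY            : x = y;
  LtXY            : x < y;
  RLit S a b      : S(x+a, y-b) \<and> x+a \<le> y-b  (a, b \<ge> 0).\<close>
datatype 'a lit =
    ULit bool "'a upred" var int
  | EqXY
  | LtXY
  | RLit nat nat nat

datatype head = HRel nat | HBot

text \<open>A Horn clause  x \<le> y \<and> \<delta>1 \<and> ... \<and> \<delta>r \<rightarrow> \<delta>0 ; the premise x \<le> y is implicit.
  A head HRel R stands for R(x,y).\<close>
type_synonym 'a clause = "'a lit list \<times> head"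

text \<open>An inclusion Horn formula  \<exists>R \<forall>x \<forall>y \<psi>(x,y), \<psi> the conjunction of the clauses.\<close>
type_synonym 'a ihorn = "'a clause list"

definition varval :: "var \<Rightarrow> nat \<Rightarrow> nat \<Rightarrow> nat" where
  "varval v x y = (case v of VX \<Rightarrow> x | VY \<Rightarrow> y)"

fun lit_holds :: "'a list \<Rightarrow> (nat \<Rightarrow> nat \<Rightarrow> nat \<Rightarrow> bool) \<Rightarrow> nat \<Rightarrow> nat \<Rightarrow> 'a lit \<Rightarrow> bool" where
  "lit_holds w I x y (ULit pol U v a) =
     (upred_holds w U (shift (length w) (varval v x y) a) = pol)"
| "lit_holds w I x y EqXY = (x = y)"
| "lit_holds w I x y LtXY = (x < y)"
| "lit_holds w I x y (RLit S a b) =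
     (I S (shift (length w) x (int a)) (unshift (length w) y b) \<and>
      shift (length w) x (int a) \<le> unshift (length w) y b)"

fun head_holds :: "(nat \<Rightarrow> nat \<Rightarrow> nat \<Rightarrow> bool) \<Rightarrow> nat \<Rightarrow> nat \<Rightarrow> head \<Rightarrow> bool" where
  "head_holds I x y (HRel R) = I R x y"
| "head_holds I x y HBot = False"

definition clause_holds :: "'a list \<Rightarrow> (nat \<Rightarrow> nat \<Rightarrow> nat \<Rightarrow> bool) \<Rightarrow> nat \<Rightarrow> nat \<Rightarrow> 'a clause \<Rightarrow> bool" where
  "clause_holds w I x y c =
     (x \<le> y \<and> (\<forall>l\<in>set (fst c). lit_holds w I x y l) \<longrightarrow> head_holds I x y (snd c))"

text \<open>Values of I outside [1,n] are irrelevant since all arguments lie in [1,n].\<close>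
definition ihorn_models :: "'a list \<Rightarrow> 'a ihorn \<Rightarrow> bool" where
  "ihorn_models w \<Phi> =
     (\<exists>I. \<forall>x\<in>{1..length w}. \<forall>y\<in>{1..length w}. \<forall>c\<in>set \<Phi>. clause_holds w I x y c)"

definition incl_ESO_HORN :: "'a list set set" where
  "incl_ESO_HORN = {L. \<exists>\<Phi>. L = {w. w \<noteq> [] \<and> ihorn_models w \<Phi>}}"

text \<open>Conjunct: either a terminal word u, or u B v with B a nonterminal.\<close>
datatype ('a, 'n) conjunct = CTerm "'a list" | CNT "'a list" 'n "'a list"

text \<open>Rule A \<rightarrow> \<alpha>1 & ... & \<alpha>k  (k \<ge> 1).\<close>
type_synonym ('a, 'n) lrule = "'n \<times> ('a, 'n) conjunct list"

text \<open>Least solution of the language equations, given inductively.\<close>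
inductive lc_gen :: "('a, 'n) lrule list \<Rightarrow> 'n \<Rightarrow> 'a list \<Rightarrow> bool" for P where
  "(A, cs) \<in> set P \<Longrightarrow> cs \<noteq> [] \<Longrightarrow>
   \<forall>c\<in>set cs. (\<exists>u. c = CTerm u \<and> w = u) \<or>
               (\<exists>u B v w'. c = CNT u B v \<and> w = u @ w' @ v \<and> lc_gen P B w')
   \<Longrightarrow> lc_gen P A w"

text \<open>Nonterminals are natural numbers (a grammar only uses finitely many).
  Each rule must have k \<ge> 1 conjuncts; rules with k = 0 are ignored by lc_gen anyway.\<close>
definition LinConj :: "'a list set set" where
  "LinConj = {L. \<exists>(P :: ('a, nat) lrule list) S. L = {w. lc_gen P S w}}"

end

theory Submission
  imports Defs "HOL-Library.Countable"
begin

(* Forward chaining of the Horn clauses yields the least interpretation of the relation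
  symbols, so a word lies outside L exactly when bottom is derivable at some pair of
  positions x <= y. Let K bound all offsets occurring in the formula. Whether a clause
  fires at (x, y) depends only on the factor u = w[x..y], on the K + 1 letters on either
  side of it, and on derivations of relation atoms at the nested pairs (x + a, y - b), i.e.
  on factors of u obtained by cutting off a bounded prefix and suffix. This is the shape of
  a linear conjunctive rule  NDer h lam rho -> u0 & u1 NDer ... u2 & ... , where the
  nonterminal records the bounded contexts lam and rho. A long factor is only inspected
  through its first and last K + 2 letters, so finitely many rules suffice, the middle
  part being generated freely. *)

lemma funpow_suc_pos: "x \<le> n \<Longrightarrow> (suc_pos n ^^ k) x = min (x + k) n"
  by (induction k) (auto simp: suc_pos_def)

lemma funpow_pred_pos: "1 \<le> x \<Longrightarrow> (pred_pos n ^^ k) x = max (x - k) 1"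
  by (induction k) (auto simp: pred_pos_def)

lemma int_shift: "1 \<le> x \<Longrightarrow> x \<le> n \<Longrightarrow> int (shift n x a) = max 1 (min (int n) (int x + a))"
  by (auto simp: shift_def funpow_suc_pos funpow_pred_pos)

lemma unshift_eq: "1 \<le> y \<Longrightarrow> unshift n y b = max (y - b) 1"
  by (simp add: unshift_def funpow_pred_pos)

lemma shift_window:
  assumes "w = p @ v @ s" "length p < t" "t \<le> length p + length v"
    "p = [] \<or> length p + K + 2 \<le> t" "s = [] \<or> t + K + 1 \<le> length p + length v"
    "\<bar>a\<bar> \<le> int K"
  shows "shift (length w) t a = length p + shift (length v) (t - length p) a"
proof -
  have "int (shift (length w) t a) = max 1 (min (int (length w)) (int t + a))"
    using assms by (intro int_shift) auto
  moreover have "int (shift (length v) (t - length p) a) =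
      max 1 (min (int (length v)) (int (t - length p) + a))"
    using assms by (intro int_shift) auto
  ultimately show ?thesis using assms(2-6) unfolding assms(1) by auto
qed

lemma upred_holds_window:
  assumes w: "w = p @ v @ s" and t: "length p < t" "t \<le> length p + length v"
    and margins: "p = [] \<or> length p + K + 2 \<le> t" "s = [] \<or> t + K + 1 \<le> length p + length v"
    and a: "\<bar>a\<bar> \<le> int K"
  shows "upred_holds w U (shift (length w) t a) = upred_holds v U (shift (length v) (t - length p) a)"
proof -
  define i where "i = shift (length v) (t - length p) a"
  have i_int: "int i = max 1 (min (int (length v)) (int (t - length p) + a))"
    using t unfolding i_def by (intro int_shift) auto
  have i: "1 \<le> i" "i \<le> length v" "p \<noteq> [] \<Longrightarrow> 2 \<le> i" "s \<noteq> [] \<Longrightarrow> i < length v"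
    using i_int t margins a by auto
  have "w ! (length p + i - 1) = (v @ s) ! (i - 1)"
    using i(1) unfolding w by (metis Nat.add_diff_assoc nth_append_length_plus)
  also have "\<dots> = v ! (i - 1)"
    using i(1,2) by (intro nth_append_left) linarith
  finally have "w ! (length p + i - 1) = v ! (i - 1)" .
  moreover have "shift (length w) t a = length p + i"
    unfolding i_def by (rule shift_window[OF w t margins a])
  ultimately show ?thesis
    using i unfolding i_def[symmetric] upred_holds_def w by (cases U) (auto, fastforce+)
qed

fun lit_offset :: "'a lit \<Rightarrow> nat" where
  "lit_offset (ULit pol U v a) = nat \<bar>a\<bar>"
| "lit_offset (RLit S a b) = max a b"
| "lit_offset EqXY = 0"
| "lit_offset LtXY = 0"

definition max_offset :: "'a ihorn \<Rightarrow> nat" where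
  "max_offset \<Phi> = Lattices_Big.Max (insert 0 (lit_offset ` (\<Union>c\<in>set \<Phi>. set (fst c))))"

lemma lit_offset_le_max_offset:
  "(body, h) \<in> set \<Phi> \<Longrightarrow> l \<in> set body \<Longrightarrow> lit_offset l \<le> max_offset \<Phi>"
  unfolding max_offset_def by (rule Max_ge) force+

text \<open>Under \<open>all_true\<close>, \<open>lit_holds\<close> only checks the unary atoms and the side conditions
  \<open>x + a \<le> y - b\<close> of relational atoms.\<close>
abbreviation all_true :: "nat \<Rightarrow> nat \<Rightarrow> nat \<Rightarrow> bool" where
  "all_true \<equiv> \<lambda>_ _ _. True"

inductive derivable :: "'a list \<Rightarrow> 'a ihorn \<Rightarrow> head \<Rightarrow> nat \<Rightarrow> nat \<Rightarrow> bool" for w \<Phi> where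
  derivableI: "(body, h) \<in> set \<Phi> \<Longrightarrow> 1 \<le> x \<Longrightarrow> x \<le> y \<Longrightarrow> y \<le> length w \<Longrightarrow>
   \<forall>l\<in>set body. lit_holds w all_true x y l \<Longrightarrow>
   \<forall>S a b. RLit S a b \<in> set body \<longrightarrow>
     derivable w \<Phi> (HRel S) (shift (length w) x (int a)) (unshift (length w) y b)
   \<Longrightarrow> derivable w \<Phi> h x y"

lemma derivable_range: "derivable w \<Phi> h x y \<Longrightarrow> 1 \<le> x \<and> x \<le> y \<and> y \<le> length w"
  by (induction rule: derivable.induct) auto

lemma lit_holds_iff_all_true:
  "lit_holds w I x y l \<longleftrightarrow> lit_holds w all_true x y l \<and>
     (\<forall>S a b. l = RLit S a b \<longrightarrow> I S (shift (length w) x (int a)) (unshift (length w) y b))"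
  by (cases l) auto

lemma derivable_head_holds:
  assumes I: "\<forall>x\<in>{1..length w}. \<forall>y\<in>{1..length w}. \<forall>c\<in>set \<Phi>. clause_holds w I x y c"
    and "derivable w \<Phi> h x y"
  shows "head_holds I x y h"
  using assms(2)
proof (induction rule: derivable.induct)
  case (derivableI body h x y)
  then have "\<forall>l\<in>set body. lit_holds w I x y l"
    by (auto simp: lit_holds_iff_all_true[of w I])
  moreover have "clause_holds w I x y (body, h)"
    using I derivableI.hyps(1-4) by auto
  ultimately show ?case
    using derivableI.hyps(3) unfolding clause_holds_def by simp
qed

lemma clause_holds_derivable:
  assumes "c \<in> set \<Phi>" "1 \<le> x" "y \<le> length w"
  shows "clause_holds w (\<lambda>S. derivable w \<Phi> (HRel S)) x y c \<or> derivable w \<Phi> HBot x y"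
proof (cases c)
  case (Pair body h)
  have "derivable w \<Phi> h x y"
    if "x \<le> y" "\<forall>l\<in>set body. lit_holds w (\<lambda>S. derivable w \<Phi> (HRel S)) x y l"
    using that assms Pair
    by (intro derivableI[of body]) (auto simp: lit_holds_iff_all_true[of w "\<lambda>S. derivable w \<Phi> (HRel S)"])
  then show ?thesis
    using Pair unfolding clause_holds_def by (cases h) auto
qed

lemma ihorn_models_iff_not_derivable:
  "ihorn_models w \<Phi> \<longleftrightarrow> \<not> (\<exists>x y. derivable w \<Phi> HBot x y)"
proof
  assume "ihorn_models w \<Phi>"
  then show "\<not> (\<exists>x y. derivable w \<Phi> HBot x y)"
    unfolding ihorn_models_def using derivable_head_holds by fastforce
next
  assume "\<not> (\<exists>x y. derivable w \<Phi> HBot x y)"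
  then show "ihorn_models w \<Phi>"
    unfolding ihorn_models_def using clause_holds_derivable by fastforce
qed

definition lastn :: "nat \<Rightarrow> 'a list \<Rightarrow> 'a list" where
  "lastn k xs = drop (length xs - k) xs"

lemma length_lastn: "length (lastn k xs) = min k (length xs)"
  by (simp add: lastn_def)

lemma lastn_append: "lastn k (p @ z) = lastn k (lastn k p @ z)"
  unfolding lastn_def
  by (cases "k \<le> length z"; cases "k \<le> length p")
    (auto simp: min_def intro!: arg_cong[where f="\<lambda>n. drop n p"])

lemma lastn_short: "length xs \<le> k \<Longrightarrow> lastn k xs = xs"
  by (simp add: lastn_def)

lemma lastn_Cons: "k \<le> length xs \<Longrightarrow> lastn k (a # xs) = lastn k xs"
  by (simp add: lastn_def Suc_diff_le)

lemma take_append_lastn: "take (length xs - k) xs @ lastn k xs = xs"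
  by (simp add: lastn_def)

text \<open>Cutting a word \<open>p @ u @ s\<close> down to \<open>lastn (Suc K) p @ u @ take (Suc K) s\<close> does not
  change what offsets of at most \<open>K\<close> from the ends of \<open>u\<close> see.\<close>

lemma shift_context:
  assumes w: "w = p @ u @ s" and lam: "lam = lastn (Suc K) p" and rho: "rho = take (Suc K) s"
    and lw: "lw = lam @ u @ rho" and d: "d = length p - length lam"
    and t: "length p + 1 \<le> t" "t \<le> length p + length u" and a: "\<bar>a\<bar> \<le> int K"
  shows "shift (length w) t a = d + shift (length lw) (t - d) a"
    "upred_holds w U (shift (length w) t a) = upred_holds lw U (shift (length lw) (t - d) a)"
proof -
  have ll: "length lam = min (Suc K) (length p)" using lam by (simp add: length_lastn)
  have lr: "length rho = min (Suc K) (length s)" using rho by simp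
  have "d = length p - Suc K" using ll d by auto
  then have W: "w = take d p @ lw @ drop (Suc K) s"
    using w lw take_append_lastn[of p "Suc K"] unfolding lam rho by simp
  have ltd: "length (take d p) = d" using d by simp
  have margins: "take d p = [] \<or> length (take d p) + K + 2 \<le> t"
    "drop (Suc K) s = [] \<or> t + K + 1 \<le> length (take d p) + length lw"
    using ll lr d t lw by auto
  have tt: "length (take d p) < t" "t \<le> length (take d p) + length lw"
    using t ltd d ll lw by auto
  show "shift (length w) t a = d + shift (length lw) (t - d) a"
    using shift_window[OF W tt margins a] ltd by simp
  show "upred_holds w U (shift (length w) t a) = upred_holds lw U (shift (length lw) (t - d) a)"
    using upred_holds_window[OF W tt margins a] ltd by simp
qed

lemma unshift_context:
  assumes "length lam = min (Suc K) (length p)" and "d = length p - length lam"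
    and "u \<noteq> []" and "b \<le> K"
  shows "unshift n (length p + length u) b = d + unshift m (length p + length u - d) b"
proof -
  have "unshift n (length p + length u) b = max (length p + length u - b) 1"
    using assms by (intro unshift_eq) (simp add: Suc_le_eq)
  moreover have "unshift m (length p + length u - d) b = max (length p + length u - d - b) 1"
    using assms by (intro unshift_eq) (auto simp: Suc_le_eq)
  moreover have "0 < length u" using assms(3) by simp
  ultimately show ?thesis using assms(1,2,4) by (cases "length p \<le> Suc K") auto
qed

lemma lit_holds_context:
  assumes w: "w = p @ u @ s" and lam: "lam = lastn (Suc K) p" and rho: "rho = take (Suc K) s"
    and u: "u \<noteq> []" and l: "lit_offset l \<le> K"
  shows "lit_holds w all_true (length p + 1) (length p + length u) l \<longleftrightarrow>
         lit_holds (lam @ u @ rho) all_true (length lam + 1) (length lam + length u) l"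
proof -
  define d where "d = length p - length lam"
  have ll: "length lam = min (Suc K) (length p)" using lam by (simp add: length_lastn)
  have x: "length p + 1 - d = length lam + 1" and y: "length p + length u - d = length lam + length u"
    using ll d_def by auto
  have u1: "1 \<le> length u" using u by (simp add: Suc_le_eq)
  note ctx = shift_context[OF w lam rho refl d_def]
  show ?thesis
  proof (cases l)
    case (ULit pol U v a)
    then have a: "\<bar>a\<bar> \<le> int K" using l by simp
    show ?thesis
      using ctx(2)[OF _ _ a, of "length p + 1" U] ctx(2)[OF _ _ a, of "length p + length u" U]
        u1 ULit x y
      by (cases v) (simp_all add: varval_def)
  next
    case (RLit S a b)
    have a: "\<bar>int a\<bar> \<le> int K" and b: "b \<le> K" using l RLit by auto
    have "shift (length w) (length p + 1) (int a) =
        d + shift (length (lam @ u @ rho)) (length lam + 1) (int a)"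
      using ctx(1)[OF _ _ a, of "length p + 1"] u1 x by simp
    moreover have "unshift (length w) (length p + length u) b =
        d + unshift (length (lam @ u @ rho)) (length lam + length u) b"
      using unshift_context[OF ll d_def u b] y by simp
    ultimately show ?thesis using RLit by simp
  qed auto
qed

text \<open>A long factor \<open>u\<close> is represented by its first and last \<open>K + 2\<close> letters: offsets of at
  most \<open>K\<close> from one end of \<open>u\<close> never reach the other.\<close>
definition skeleton :: "nat \<Rightarrow> 'a list \<Rightarrow> 'a list" where
  "skeleton K u = (if length u \<le> 2 * Suc K + 2 then u
     else take (Suc (Suc K)) u @ drop (length u - Suc (Suc K)) u)"

lemma upred_holds_long_left:
  assumes lw: "lw = lam @ u @ rho" and u: "2 * Suc K + 2 \<le> length u" and a: "\<bar>a\<bar> \<le> int K"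
  shows "upred_holds lw U (shift (length lw) (length lam + 1) a) =
    upred_holds (lam @ take (Suc (Suc K)) u) U (shift (length lam + Suc (Suc K)) (length lam + 1) a)"
proof -
  have "lw = [] @ (lam @ take (Suc (Suc K)) u) @ (drop (Suc (Suc K)) u @ rho)"
    using lw by simp
  from upred_holds_window[OF this _ _ _ _ a] show ?thesis
    using u by (simp add: min_def)
qed

lemma upred_holds_long_right:
  assumes lw: "lw = lam @ u @ rho" and u: "2 * Suc K + 2 \<le> length u" and a: "\<bar>a\<bar> \<le> int K"
  shows "upred_holds lw U (shift (length lw) (length lam + length u) a) =
    upred_holds (drop (length u - Suc (Suc K)) u @ rho) U
      (shift (Suc (Suc K) + length rho) (Suc (Suc K)) a)"
proof -
  let ?v = "drop (length u - Suc (Suc K)) u @ rho"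
  have "lw = (lam @ take (length u - Suc (Suc K)) u) @ ?v @ []"
    using lw by simp
  then have "upred_holds lw U (shift (length lw) (length lam + length u) a) = upred_holds ?v U
    (shift (length ?v) (length lam + length u - length (lam @ take (length u - Suc (Suc K)) u)) a)"
    by (rule upred_holds_window[OF _ _ _ _ _ a]) (use u in auto)
  moreover have "length lam + length u - length (lam @ take (length u - Suc (Suc K)) u) = Suc (Suc K)"
    "length ?v = Suc (Suc K) + length rho"
    using u by auto
  ultimately show ?thesis by (simp only:)
qed

lemma shift_long:
  assumes "lw = lam @ u @ rho" "2 * Suc K + 2 \<le> length u" "a \<le> K"
  shows "shift (length lw) (length lam + 1) (int a) = length lam + 1 + a"
proof -
  have "int (shift (length lw) (length lam + 1) (int a)) =
      max 1 (min (int (length lw)) (int (length lam + 1) + int a))"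
    using assms by (intro int_shift) auto
  then show ?thesis using assms by auto
qed

lemma unshift_long:
  assumes "2 * Suc K + 2 \<le> length u" "b \<le> K"
  shows "unshift n (length lam + length u) b = length lam + length u - b"
  using assms by (subst unshift_eq) auto

lemma lit_holds_skeleton:
  assumes u: "u \<noteq> []" and l: "lit_offset l \<le> K"
  shows "lit_holds (lam @ u @ rho) all_true (length lam + 1) (length lam + length u) l \<longleftrightarrow>
    lit_holds (lam @ skeleton K u @ rho) all_true (length lam + 1)
      (length lam + length (skeleton K u)) l"
proof (cases "length u \<le> 2 * Suc K + 2")
  case False
  define u0 where "u0 = skeleton K u"
  have long: "2 * Suc K + 2 \<le> length u" using False by simp
  have u0: "2 * Suc K + 2 \<le> length u0" "take (Suc (Suc K)) u0 = take (Suc (Suc K)) u"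
    "drop (length u0 - Suc (Suc K)) u0 = drop (length u - Suc (Suc K)) u"
    using False unfolding u0_def skeleton_def by auto
  have "lit_holds (lam @ u @ rho) all_true (length lam + 1) (length lam + length u) l \<longleftrightarrow>
    lit_holds (lam @ u0 @ rho) all_true (length lam + 1) (length lam + length u0) l"
  proof (cases l)
    case (ULit pol U v a)
    then have a: "\<bar>a\<bar> \<le> int K" using l by simp
    show ?thesis
      using upred_holds_long_left[OF refl long a, of lam rho U]
        upred_holds_long_left[OF refl u0(1) a, of lam rho U]
        upred_holds_long_right[OF refl long a, of lam rho U]
        upred_holds_long_right[OF refl u0(1) a, of lam rho U] u0 ULit
      by (cases v) (simp_all add: varval_def)
  next
    case (RLit S a b)
    then have a: "a \<le> K" and b: "b \<le> K" using l by auto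
    have "shift (length (lam @ u @ rho)) (length lam + 1) (int a) = length lam + 1 + a"
      "shift (length (lam @ u0 @ rho)) (length lam + 1) (int a) = length lam + 1 + a"
      using shift_long[OF refl long a] shift_long[OF refl u0(1) a] by blast+
    moreover have "unshift (length (lam @ u @ rho)) (length lam + length u) b = length lam + length u - b"
      "unshift (length (lam @ u0 @ rho)) (length lam + length u0) b = length lam + length u0 - b"
      using unshift_long[OF long b] unshift_long[OF u0(1) b] by blast+
    moreover have "length lam + 1 + a \<le> length lam + length u - b"
      "length lam + 1 + a \<le> length lam + length u0 - b"
      using long u0(1) a b by auto
    ultimately show ?thesis unfolding RLit lit_holds.simps by presburger
  qed (use long u0(1) in simp_all)
  then show ?thesis unfolding u0_def .
qed (simp add: skeleton_def)

lemma lit_holds_transfer: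
  assumes "w = p @ u @ s" and "lam = lastn (Suc K) p" and "rho = take (Suc K) s"
    and "u \<noteq> []" and "lit_offset l \<le> K"
  shows "lit_holds w all_true (length p + 1) (length p + length u) l \<longleftrightarrow>
    lit_holds (lam @ skeleton K u @ rho) all_true (length lam + 1)
      (length lam + length (skeleton K u)) l"
  using lit_holds_context[OF assms] lit_holds_skeleton[OF assms(4,5)] by simp

definition cut_left :: "'a list \<Rightarrow> 'a list \<Rightarrow> 'a list \<Rightarrow> nat \<Rightarrow> 'a list" where
  "cut_left lam u rho a = take (shift (length (lam @ u @ rho)) (length lam + 1) (int a) - (length lam + 1)) u"

definition cut_right :: "'a list \<Rightarrow> 'a list \<Rightarrow> 'a list \<Rightarrow> nat \<Rightarrow> 'a list" where
  "cut_right lam u rho b = drop (unshift (length (lam @ u @ rho)) (length lam + length u) b - length lam) u"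

lemma append_take_drop_take: "i \<le> j \<Longrightarrow> take i u @ drop i (take j u) @ drop j u = u"
  by (metis append.assoc append_take_drop_id min.absorb1 take_take)

lemma cut_exact:
  assumes u: "u \<noteq> []"
    and rl: "lit_holds (lam @ u @ rho) all_true (length lam + 1) (length lam + length u) (RLit S a b)"
  shows "shift (length (lam @ u @ rho)) (length lam + 1) (int a) =
      length lam + length (cut_left lam u rho a) + 1"
    "unshift (length (lam @ u @ rho)) (length lam + length u) b + length (cut_right lam u rho b) =
      length lam + length u"
    "\<exists>u'. u = cut_left lam u rho a @ u' @ cut_right lam u rho b"
proof -
  define X where "X = shift (length (lam @ u @ rho)) (length lam + 1) (int a)"
  define Y where "Y = unshift (length (lam @ u @ rho)) (length lam + length u) b"
  have XY: "X \<le> Y" using rl unfolding X_def Y_def by simp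
  have "int X = max 1 (min (int (length (lam @ u @ rho))) (int (length lam + 1) + int a))"
    unfolding X_def using u by (intro int_shift) (auto simp: Suc_le_eq)
  moreover obtain n where n: "length u = Suc n" using u by (cases u) auto
  ultimately have X: "length lam + 1 \<le> X" by (simp add: max_def min_def split: if_splits)
  have "Y = max (length lam + length u - b) 1"
    unfolding Y_def using n by (intro unshift_eq) simp
  then have Y: "Y \<le> length lam + length u" using n by auto
  have u1: "cut_left lam u rho a = take (X - (length lam + 1)) u"
    and u2: "cut_right lam u rho b = drop (Y - length lam) u"
    unfolding cut_left_def cut_right_def X_def Y_def by simp_all
  show "X = length lam + length (cut_left lam u rho a) + 1"
    "Y + length (cut_right lam u rho b) = length lam + length u"
    using X XY Y unfolding u1 u2 by auto
  have "u = take (X - (length lam + 1)) u @ drop (X - (length lam + 1)) (take (Y - length lam) u) @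
      drop (Y - length lam) u"
    using XY by (simp add: append_take_drop_take)
  then show "\<exists>u'. u = cut_left lam u rho a @ u' @ cut_right lam u rho b"
    unfolding u1 u2 by blast
qed

lemma cut_skeleton:
  assumes "a \<le> K" "b \<le> K"
  shows "cut_left lam (skeleton K u) rho a = cut_left lam u rho a"
    "cut_right lam (skeleton K u) rho b = cut_right lam u rho b"
proof (atomize (full), cases "length u \<le> 2 * Suc K + 2")
  case False
  define u0 where "u0 = skeleton K u"
  have long: "2 * Suc K + 2 \<le> length u" using False by simp
  then have u0: "2 * Suc K + 2 \<le> length u0"
    "take a u0 = take a u" "drop (length u0 - b) u0 = drop (length u - b) u"
    using False assms unfolding u0_def skeleton_def by (auto simp: min_def)
  have "cut_left lam u0 rho a = take a u0" "cut_right lam u0 rho b = drop (length u0 - b) u0"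
    "cut_left lam u rho a = take a u" "cut_right lam u rho b = drop (length u - b) u"
    unfolding cut_left_def cut_right_def
      shift_long[OF refl u0(1) assms(1)] unshift_long[OF u0(1) assms(2)]
      shift_long[OF refl long assms(1)] unshift_long[OF long assms(2)]
    by simp_all
  then show "cut_left lam u0 rho a = cut_left lam u rho a \<and>
    cut_right lam u0 rho b = cut_right lam u rho b"
    using u0 by simp
qed (simp add: skeleton_def)

lemma cut_geometry:
  assumes w: "w = p @ u @ s" and lam: "lam = lastn (Suc K) p" and rho: "rho = take (Suc K) s"
    and u: "u \<noteq> []" and a: "a \<le> K" and b: "b \<le> K"
    and rl: "lit_holds (lam @ skeleton K u @ rho) all_true (length lam + 1)
      (length lam + length (skeleton K u)) (RLit S a b)"
  defines "u1 \<equiv> cut_left lam (skeleton K u) rho a" and "u2 \<equiv> cut_right lam (skeleton K u) rho b"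
  shows "shift (length w) (length p + 1) (int a) = length p + length u1 + 1"
    "unshift (length w) (length p + length u) b + length u2 = length p + length u"
    "\<exists>u'. u = u1 @ u' @ u2"
proof -
  have "lit_offset (RLit S a b) \<le> K" using a b by simp
  then have "lit_holds (lam @ u @ rho) all_true (length lam + 1) (length lam + length u) (RLit S a b)"
    using rl by (rule lit_holds_skeleton[OF u, THEN iffD2])
  note exact = cut_exact[OF u this, folded cut_skeleton[OF a b, of lam u rho]]
  define d where "d = length p - length lam"
  have ll: "length lam = min (Suc K) (length p)" using lam by (simp add: length_lastn)
  have dl: "d + length lam = length p" using ll d_def by simp
  then have x: "length p + 1 - d = length lam + 1" and y: "length p + length u - d = length lam + length u"
    by auto
  obtain n where n: "length u = Suc n" using u by (cases u) auto
  have "shift (length w) (length p + 1) (int a) =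
      d + shift (length (lam @ u @ rho)) (length lam + 1) (int a)"
    using shift_context(1)[OF w lam rho refl d_def, of "length p + 1" "int a"] n a
    unfolding x by simp
  moreover have "unshift (length w) (length p + length u) b =
      d + unshift (length (lam @ u @ rho)) (length lam + length u) b"
    using unshift_context[OF ll d_def u b, of "length w" "length (lam @ u @ rho)"]
    unfolding y .
  ultimately show "shift (length w) (length p + 1) (int a) = length p + length u1 + 1"
    "unshift (length w) (length p + length u) b + length u2 = length p + length u"
    using exact(1,2) dl unfolding u1_def u2_def by linarith+
  show "\<exists>u'. u = u1 @ u' @ u2" unfolding u1_def u2_def by (fact exact(3))
qed

fun conjunct_lang :: "('n \<Rightarrow> 'a list \<Rightarrow> bool) \<Rightarrow> ('a, 'n) conjunct \<Rightarrow> 'a list \<Rightarrow> bool" where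
  "conjunct_lang L (CTerm u) w \<longleftrightarrow> w = u"
| "conjunct_lang L (CNT u B v) w \<longleftrightarrow> (\<exists>w'. w = u @ w' @ v \<and> L B w')"

lemma conjunct_lang_iff:
  "conjunct_lang L c w \<longleftrightarrow>
    (\<exists>u. c = CTerm u \<and> w = u) \<or> (\<exists>u B v w'. c = CNT u B v \<and> w = u @ w' @ v \<and> L B w')"
  by (cases c) auto

lemma conjunct_lang_mono:
  "conjunct_lang L c w \<Longrightarrow> (\<And>B v. L B v \<Longrightarrow> L' B v) \<Longrightarrow> conjunct_lang L' c w"
  by (cases c) auto

lemma lc_gen_intro:
  "(A, cs) \<in> set P \<Longrightarrow> cs \<noteq> [] \<Longrightarrow> \<forall>c\<in>set cs. conjunct_lang (lc_gen P) c w \<Longrightarrow> lc_gen P A w"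
  by (rule lc_gen.intros) (auto simp: conjunct_lang_iff)

lemma lc_gen_induct[consumes 1, case_names rule]:
  assumes "lc_gen P A w"
    and "\<And>A cs w. (A, cs) \<in> set P \<Longrightarrow> cs \<noteq> [] \<Longrightarrow>
      \<forall>c\<in>set cs. conjunct_lang (\<lambda>B w'. lc_gen P B w' \<and> R B w') c w \<Longrightarrow> R A w"
  shows "R A w"
  using assms(1)
proof (induction rule: lc_gen.induct)
  case (1 A cs w)
  then show ?case by (intro assms(2)) (auto simp: conjunct_lang_iff)
qed

lemma lc_gen_unit_rule:
  "(A, [CNT u B v]) \<in> set P \<Longrightarrow> lc_gen P B w \<Longrightarrow> lc_gen P A (u @ w @ v)"
  by (rule lc_gen_intro) auto

definition rename_rules :: "('n \<Rightarrow> 'm) \<Rightarrow> ('a, 'n) lrule list \<Rightarrow> ('a, 'm) lrule list" where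
  "rename_rules f P = map (\<lambda>(A, cs). (f A, map (map_conjunct id f) cs)) P"

lemma conjunct_lang_rename:
  "conjunct_lang L (map_conjunct id f c) w \<longleftrightarrow> conjunct_lang (\<lambda>B. L (f B)) c w"
  by (cases c) auto

lemma lc_gen_rename:
  assumes "inj f"
  shows "lc_gen (rename_rules f P) (f A) w \<longleftrightarrow> lc_gen P A w"
proof
  show "lc_gen (rename_rules f P) (f A) w" if "lc_gen P A w"
    using that
  proof (induction rule: lc_gen_induct)
    case (rule A cs w)
    then show ?case
      by (intro lc_gen_intro[of _ "map (map_conjunct id f) cs"])
        (force simp: rename_rules_def conjunct_lang_rename elim: conjunct_lang.elims)+
  qed
  show "lc_gen P A w" if "lc_gen (rename_rules f P) (f A) w"
    using that
  proof (induction "f A" w arbitrary: A rule: lc_gen_induct)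
    case (rule cs' w)
    then obtain A' cs where "(A', cs) \<in> set P" "f A = f A'" "cs' = map (map_conjunct id f) cs"
      by (auto simp: rename_rules_def)
    moreover have "A' = A" using assms \<open>f A = f A'\<close> by (simp add: inj_eq)
    ultimately show ?case
      using rule by (intro lc_gen_intro) (force simp: conjunct_lang_rename elim: conjunct_lang.elims)+
  qed
qed

lemma LinConj_countable:
  fixes P :: "('a, 'n::countable) lrule list"
  shows "{w. lc_gen P S w} \<in> LinConj"
  unfolding LinConj_def
  using lc_gen_rename[of "to_nat :: 'n \<Rightarrow> nat" P S] by auto

datatype 'a nt = NAny | NDer head "'a list" "'a list" | NBotR "'a list" "'a list"
  | NBotLR "'a list" "'a list" | NStart

instance head :: countable by countable_datatype
instance nt :: (countable) countable by countable_datatype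

definition letters :: "'a::finite list" where
  "letters = (SOME xs. set xs = UNIV)"

lemma set_letters: "set (letters :: 'a::finite list) = UNIV"
  unfolding letters_def by (rule someI_ex) (use finite_list[OF finite_UNIV] in blast)

definition words_between :: "nat \<Rightarrow> nat \<Rightarrow> 'a::finite list list" where
  "words_between i j = concat (map (\<lambda>k. List.n_lists k letters) [i..<Suc j])"

lemma set_words_between: "set (words_between i j) = {xs. i \<le> length xs \<and> length xs \<le> j}"
  by (auto simp: words_between_def set_n_lists set_letters less_Suc_eq_le)

definition local_body_holds :: "'a list \<Rightarrow> 'a list \<Rightarrow> 'a list \<Rightarrow> 'a lit list \<Rightarrow> bool" where
  "local_body_holds lam u rho body \<longleftrightarrow>
    (\<forall>l\<in>set body. lit_holds (lam @ u @ rho) all_true (length lam + 1) (length lam + length u) l)"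

definition rlit_conjunct ::
    "nat \<Rightarrow> 'a list \<Rightarrow> 'a list \<Rightarrow> 'a list \<Rightarrow> nat \<Rightarrow> nat \<Rightarrow> nat \<Rightarrow> ('a, 'a nt) conjunct"
  where "rlit_conjunct K lam u rho S a b =
    CNT (cut_left lam u rho a)
      (NDer (HRel S) (lastn (Suc K) (lam @ cut_left lam u rho a))
        (take (Suc K) (cut_right lam u rho b @ rho)))
      (cut_right lam u rho b)"

definition body_conjuncts ::
    "nat \<Rightarrow> 'a list \<Rightarrow> 'a list \<Rightarrow> 'a list \<Rightarrow> 'a lit list \<Rightarrow> ('a, 'a nt) conjunct list"
  where "body_conjuncts K lam u rho body = [rlit_conjunct K lam u rho S a b. RLit S a b \<leftarrow> body]"

lemma set_body_conjuncts:
  "set (body_conjuncts K lam u rho body) =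
    {rlit_conjunct K lam u rho S a b | S a b. RLit S a b \<in> set body}"
  unfolding body_conjuncts_def by (induction body) (auto split: lit.splits)

definition skeleton_conjuncts :: "nat \<Rightarrow> 'a list \<Rightarrow> ('a, 'a nt) conjunct list" where
  "skeleton_conjuncts K u = CTerm u #
    (if length u = 2 * Suc K + 2 then [CNT (take (Suc (Suc K)) u) NAny (drop (Suc (Suc K)) u)] else [])"

definition any_rules :: "('a::finite, 'a nt) lrule list" where
  "any_rules = (NAny, [CTerm []]) # [(NAny, [CNT [a] NAny []]). a \<leftarrow> letters]"

definition start_rules :: "nat \<Rightarrow> ('a::finite, 'a nt) lrule list" where
  "start_rules K = [r. lam \<leftarrow> words_between 0 (Suc K), rho \<leftarrow> words_between 0 (Suc K),
     r \<leftarrow> [(NBotR lam rho, [CNT [] (NDer HBot lam rho) rho]),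
           (NBotLR lam rho, [CNT lam (NBotR lam rho) []]),
           (NStart, [CNT [] (NBotLR lam rho) []])]
        @ (if length rho = Suc K then [(NBotR lam rho, [CNT [] (NBotR lam rho) [a]]). a \<leftarrow> letters] else [])
        @ (if length lam = Suc K then [(NBotLR lam rho, [CNT [a] (NBotLR lam rho) []]). a \<leftarrow> letters] else [])]"

definition der_rules :: "nat \<Rightarrow> 'a::finite ihorn \<Rightarrow> ('a, 'a nt) lrule list" where
  "der_rules K \<Phi> = [(NDer h lam rho, c # body_conjuncts K lam u rho body).
     (body, h) \<leftarrow> \<Phi>, lam \<leftarrow> words_between 0 (Suc K), rho \<leftarrow> words_between 0 (Suc K),
     u \<leftarrow> words_between 1 (2 * Suc K + 2), local_body_holds lam u rho body,
     c \<leftarrow> skeleton_conjuncts K u]"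

definition complement_grammar :: "nat \<Rightarrow> 'a::finite ihorn \<Rightarrow> ('a, 'a nt) lrule list" where
  "complement_grammar K \<Phi> = any_rules @ start_rules K @ der_rules K \<Phi>"

lemma mem_any_rules:
  "(A, cs) \<in> set any_rules \<longleftrightarrow> A = NAny \<and> (cs = [CTerm []] \<or> (\<exists>a. cs = [CNT [a] NAny []]))"
  by (auto simp: any_rules_def set_letters)

lemma mem_start_rules:
  "(A, cs) \<in> set (start_rules K) \<longleftrightarrow> (\<exists>lam rho. length lam \<le> Suc K \<and> length rho \<le> Suc K \<and>
    (A = NBotR lam rho \<and> cs = [CNT [] (NDer HBot lam rho) rho] \<or>
     A = NBotLR lam rho \<and> cs = [CNT lam (NBotR lam rho) []] \<or>
     A = NStart \<and> cs = [CNT [] (NBotLR lam rho) []] \<or>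
     length rho = Suc K \<and> A = NBotR lam rho \<and> (\<exists>a. cs = [CNT [] (NBotR lam rho) [a]]) \<or>
     length lam = Suc K \<and> A = NBotLR lam rho \<and> (\<exists>a. cs = [CNT [a] (NBotLR lam rho) []])))"
  by (auto simp: start_rules_def set_words_between set_letters image_iff)

lemma mem_der_rules:
  "(A, cs) \<in> set (der_rules K \<Phi>) \<longleftrightarrow> (\<exists>body h lam rho u c. (body, h) \<in> set \<Phi> \<and>
    length lam \<le> Suc K \<and> length rho \<le> Suc K \<and> u \<noteq> [] \<and> length u \<le> 2 * Suc K + 2 \<and>
    local_body_holds lam u rho body \<and> c \<in> set (skeleton_conjuncts K u) \<and>
    A = NDer h lam rho \<and> cs = c # body_conjuncts K lam u rho body)"
  (is "?lhs \<longleftrightarrow> ?rhs")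
proof
  show ?rhs if ?lhs
    using that unfolding der_rules_def by (auto simp: set_words_between Suc_le_eq) blast
qed (fastforce simp: der_rules_def set_words_between Suc_le_eq)

lemma local_body_holds_iff:
  assumes K: "max_offset \<Phi> \<le> K" and bh: "(body, h) \<in> set \<Phi>" and u: "u \<noteq> []"
  shows "local_body_holds (lastn (Suc K) p) (skeleton K u) (take (Suc K) s) body \<longleftrightarrow>
    (\<forall>l\<in>set body. lit_holds (p @ u @ s) all_true (length p + 1) (length p + length u) l)"
proof -
  have "lit_offset l \<le> K" if "l \<in> set body" for l
    using lit_offset_le_max_offset[OF bh that] K by simp
  then show ?thesis
    using lit_holds_transfer[OF refl refl refl u] unfolding local_body_holds_def by blast
qed

lemma der_rule_in_grammar:
  assumes "(body, h) \<in> set \<Phi>" "length lam \<le> Suc K" "length rho \<le> Suc K" "u \<noteq> []"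
    "local_body_holds lam (skeleton K u) rho body" "c \<in> set (skeleton_conjuncts K (skeleton K u))"
  shows "(NDer h lam rho, c # body_conjuncts K lam (skeleton K u) rho body) \<in> set (complement_grammar K \<Phi>)"
proof -
  have "skeleton K u \<noteq> []" "length (skeleton K u) \<le> 2 * Suc K + 2"
    using assms(4) by (auto simp: skeleton_def)
  then have "(NDer h lam rho, c # body_conjuncts K lam (skeleton K u) rho body) \<in> set (der_rules K \<Phi>)"
    using assms unfolding mem_der_rules by blast
  then show ?thesis by (simp add: complement_grammar_def)
qed

definition derives_in_context ::
    "nat \<Rightarrow> 'a ihorn \<Rightarrow> head \<Rightarrow> 'a list \<Rightarrow> 'a list \<Rightarrow> 'a list \<Rightarrow> bool"
  where
  "derives_in_context K \<Phi> h lam rho u \<longleftrightarrow> u \<noteq> [] \<and>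
    (\<forall>p s. lastn (Suc K) p = lam \<longrightarrow> take (Suc K) s = rho \<longrightarrow>
      derivable (p @ u @ s) \<Phi> h (length p + 1) (length p + length u))"

fun nt_lang :: "nat \<Rightarrow> 'a ihorn \<Rightarrow> 'a nt \<Rightarrow> 'a list \<Rightarrow> bool" where
  "nt_lang K \<Phi> NAny w \<longleftrightarrow> True"
| "nt_lang K \<Phi> (NDer h lam rho) w \<longleftrightarrow> derives_in_context K \<Phi> h lam rho w"
| "nt_lang K \<Phi> (NBotR lam rho) w \<longleftrightarrow>
    (\<exists>u s. w = u @ s \<and> take (Suc K) s = rho \<and> derives_in_context K \<Phi> HBot lam rho u)"
| "nt_lang K \<Phi> (NBotLR lam rho) w \<longleftrightarrow>
    (\<exists>p u s. w = p @ u @ s \<and> lastn (Suc K) p = lam \<and> take (Suc K) s = rho \<and>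
      derives_in_context K \<Phi> HBot lam rho u)"
| "nt_lang K \<Phi> NStart w \<longleftrightarrow> (\<exists>x y. derivable w \<Phi> HBot x y)"

lemma context_append:
  assumes "lastn (Suc K) p = lam" and "take (Suc K) s = rho"
  shows "lastn (Suc K) (p @ u1) = lastn (Suc K) (lam @ u1)" "take (Suc K) (u2 @ s) = take (Suc K) (u2 @ rho)"
  using lastn_append[of "Suc K" p u1] assms by auto

lemma derives_in_context_embed:
  assumes "derives_in_context K \<Phi> h (lastn (Suc K) (lam @ u1)) (take (Suc K) (u2 @ rho)) u'"
    and "lastn (Suc K) p = lam" and "take (Suc K) s = rho"
  shows "derivable (p @ u1 @ u' @ u2 @ s) \<Phi> h (length p + length u1 + 1)
    (length p + length u1 + length u')"
  using assms(1) context_append[OF assms(2,3)] unfolding derives_in_context_def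
  by (metis append.assoc length_append)

lemma derives_in_context_rule:
  assumes K: "max_offset \<Phi> \<le> K" and bh: "(body, h) \<in> set \<Phi>" and u: "u \<noteq> []"
    and local: "local_body_holds lam (skeleton K u) rho body"
    and inner: "\<forall>c\<in>set (body_conjuncts K lam (skeleton K u) rho body). conjunct_lang (nt_lang K \<Phi>) c u"
  shows "derives_in_context K \<Phi> h lam rho u"
  unfolding derives_in_context_def
proof (intro conjI allI impI)
  fix p s assume p: "lastn (Suc K) p = lam" and s: "take (Suc K) s = rho"
  show "derivable (p @ u @ s) \<Phi> h (length p + 1) (length p + length u)"
  proof (rule derivableI[OF bh])
    show "1 \<le> length p + 1" "length p + 1 \<le> length p + length u" "length p + length u \<le> length (p @ u @ s)"
      using u by (auto simp: Suc_le_eq)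
    show "\<forall>l\<in>set body. lit_holds (p @ u @ s) all_true (length p + 1) (length p + length u) l"
      using local local_body_holds_iff[OF K bh u, of p s] unfolding p s by blast
    show "\<forall>S a b. RLit S a b \<in> set body \<longrightarrow> derivable (p @ u @ s) \<Phi> (HRel S)
        (shift (length (p @ u @ s)) (length p + 1) (int a)) (unshift (length (p @ u @ s)) (length p + length u) b)"
    proof (intro allI impI)
      fix S a b assume rb: "RLit S a b \<in> set body"
      have ab: "a \<le> K" "b \<le> K" using lit_offset_le_max_offset[OF bh rb] K by auto
      define u1 where "u1 = cut_left lam (skeleton K u) rho a"
      define u2 where "u2 = cut_right lam (skeleton K u) rho b"
      have "conjunct_lang (nt_lang K \<Phi>) (rlit_conjunct K lam (skeleton K u) rho S a b) u"
        using inner rb unfolding set_body_conjuncts by blast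
      then obtain u' where uu: "u = u1 @ u' @ u2"
        and der: "derives_in_context K \<Phi> (HRel S) (lastn (Suc K) (lam @ u1)) (take (Suc K) (u2 @ rho)) u'"
        unfolding rlit_conjunct_def u1_def u2_def by auto
      have "lit_holds (lam @ skeleton K u @ rho) all_true (length lam + 1)
          (length lam + length (skeleton K u)) (RLit S a b)"
        using local rb unfolding local_body_holds_def by blast
      note geometry = cut_geometry[OF refl p[symmetric] s[symmetric] u ab this, folded u1_def u2_def]
      show "derivable (p @ u @ s) \<Phi> (HRel S)
          (shift (length (p @ u @ s)) (length p + 1) (int a)) (unshift (length (p @ u @ s)) (length p + length u) b)"
        using derives_in_context_embed[OF der p s] geometry(1,2) unfolding uu
        by (simp add: add.assoc)
    qed
  qed
qed (fact u)

lemma skeleton_conjuncts_sound: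
  assumes "c \<in> set (skeleton_conjuncts K u0)" "length u0 \<le> 2 * Suc K + 2" "conjunct_lang L c w"
  shows "skeleton K w = u0"
proof (cases "c = CTerm u0")
  case True
  then show ?thesis using assms by (simp add: skeleton_def)
next
  case False
  then have u0: "length u0 = 2 * Suc K + 2"
    and c: "c = CNT (take (Suc (Suc K)) u0) NAny (drop (Suc (Suc K)) u0)"
    using assms(1) by (auto simp: skeleton_conjuncts_def split: if_splits)
  then obtain x where "w = take (Suc (Suc K)) u0 @ x @ drop (Suc (Suc K)) u0"
    using assms(3) by auto
  then show ?thesis using u0 by (cases x) (simp_all add: skeleton_def)
qed

lemma start_rules_sound:
  assumes "(A, cs) \<in> set (start_rules K)" and "\<forall>c\<in>set cs. conjunct_lang (nt_lang K \<Phi>) c w"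
  shows "nt_lang K \<Phi> A w"
proof -
  obtain lam rho where "length lam \<le> Suc K" "length rho \<le> Suc K" and
    "A = NBotR lam rho \<and> cs = [CNT [] (NDer HBot lam rho) rho] \<or>
     A = NBotLR lam rho \<and> cs = [CNT lam (NBotR lam rho) []] \<or>
     A = NStart \<and> cs = [CNT [] (NBotLR lam rho) []] \<or>
     length rho = Suc K \<and> A = NBotR lam rho \<and> (\<exists>a. cs = [CNT [] (NBotR lam rho) [a]]) \<or>
     length lam = Suc K \<and> A = NBotLR lam rho \<and> (\<exists>a. cs = [CNT [a] (NBotLR lam rho) []])"
    using assms(1) unfolding mem_start_rules by blast
  then show ?thesis
  proof (elim disjE conjE exE)
    assume "A = NBotR lam rho" "cs = [CNT [] (NDer HBot lam rho) rho]"
    then show ?thesis using assms(2) \<open>length rho \<le> Suc K\<close> by fastforce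
  next
    assume "A = NBotLR lam rho" "cs = [CNT lam (NBotR lam rho) []]"
    then show ?thesis using assms(2) lastn_short[OF \<open>length lam \<le> Suc K\<close>] by fastforce
  next
    assume "A = NStart" "cs = [CNT [] (NBotLR lam rho) []]"
    then obtain p u s where "w = p @ u @ s" "lastn (Suc K) p = lam" "take (Suc K) s = rho"
        "derives_in_context K \<Phi> HBot lam rho u"
      using assms(2) by auto
    then have "derivable w \<Phi> HBot (length p + 1) (length p + length u)"
      unfolding derives_in_context_def by blast
    then show ?thesis using \<open>A = NStart\<close> by auto
  next
    fix a assume rho: "length rho = Suc K" and "A = NBotR lam rho" "cs = [CNT [] (NBotR lam rho) [a]]"
    then obtain u s where "w = u @ s @ [a]" "take (Suc K) s = rho" "derives_in_context K \<Phi> HBot lam rho u"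
      using assms(2) by auto
    moreover have "Suc K \<le> length s"
      using arg_cong[OF \<open>take (Suc K) s = rho\<close>, of length] rho by simp
    then have "take (Suc K) (s @ [a]) = rho" using \<open>take (Suc K) s = rho\<close> by simp
    ultimately show ?thesis unfolding \<open>A = NBotR lam rho\<close> nt_lang.simps
      by (intro exI[of _ u] exI[of _ "s @ [a]"]) simp
  next
    fix a assume lam: "length lam = Suc K" and "A = NBotLR lam rho" "cs = [CNT [a] (NBotLR lam rho) []]"
    then obtain p u s where "w = a # p @ u @ s" "lastn (Suc K) p = lam" "take (Suc K) s = rho"
        "derives_in_context K \<Phi> HBot lam rho u"
      using assms(2) by auto
    moreover have "Suc K \<le> length p"
      using arg_cong[OF \<open>lastn (Suc K) p = lam\<close>, of length] lam by (simp add: length_lastn)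
    then have "lastn (Suc K) (a # p) = lam" using \<open>lastn (Suc K) p = lam\<close> by (simp add: lastn_Cons)
    ultimately show ?thesis unfolding \<open>A = NBotLR lam rho\<close> nt_lang.simps
      by (intro exI[of _ "a # p"] exI[of _ u] exI[of _ s]) simp
  qed
qed

lemma complement_grammar_sound:
  assumes K: "max_offset \<Phi> \<le> K" and "lc_gen (complement_grammar K \<Phi>) A w"
  shows "nt_lang K \<Phi> A w"
  using assms(2)
proof (induction rule: lc_gen_induct)
  case (rule A cs w)
  then have conjuncts: "\<forall>c\<in>set cs. conjunct_lang (nt_lang K \<Phi>) c w"
    using conjunct_lang_mono by blast
  consider "(A, cs) \<in> set any_rules" | "(A, cs) \<in> set (start_rules K)" | "(A, cs) \<in> set (der_rules K \<Phi>)"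
    using rule(1) unfolding complement_grammar_def by auto
  then show ?case
  proof cases
    case 1
    then show ?thesis by (simp add: mem_any_rules)
  next
    case 2
    then show ?thesis using conjuncts by (rule start_rules_sound)
  next
    case 3
    then obtain body h lam rho u c where bh: "(body, h) \<in> set \<Phi>" and u: "u \<noteq> []" "length u \<le> 2 * Suc K + 2"
      and local: "local_body_holds lam u rho body" and c: "c \<in> set (skeleton_conjuncts K u)"
      and A: "A = NDer h lam rho" and cs: "cs = c # body_conjuncts K lam u rho body"
      unfolding mem_der_rules by blast
    have sk: "skeleton K w = u"
      using skeleton_conjuncts_sound[OF c u(2)] conjuncts cs by auto
    then have "w \<noteq> []" using u(1) by (auto simp: skeleton_def)
    then show ?thesis
      using derives_in_context_rule[OF K bh _ local[folded sk]] conjuncts A cs sk by simp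
  qed
qed

lemma lc_gen_NAny: "lc_gen (complement_grammar K \<Phi>) NAny w"
proof (induction w)
  case Nil
  show ?case
    by (rule lc_gen_intro[of _ "[CTerm []]"]) (auto simp: complement_grammar_def mem_any_rules)
next
  case (Cons a w)
  have "(NAny, [CNT [a] NAny []]) \<in> set (complement_grammar K \<Phi>)"
    by (auto simp: complement_grammar_def mem_any_rules)
  from lc_gen_unit_rule[OF this Cons] show ?case by simp
qed

lemma skeleton_conjuncts_complete:
  assumes "u \<noteq> []"
  shows "\<exists>c\<in>set (skeleton_conjuncts K (skeleton K u)). conjunct_lang (lc_gen (complement_grammar K \<Phi>)) c u"
proof (cases "length u \<le> 2 * Suc K + 2")
  case True
  then show ?thesis by (simp add: skeleton_conjuncts_def skeleton_def)
next
  case False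
  let ?m = "Suc (Suc K)"
  have sk: "length (skeleton K u) = 2 * Suc K + 2" "take ?m (skeleton K u) = take ?m u"
    "drop ?m (skeleton K u) = drop (length u - ?m) u"
    using False by (auto simp: skeleton_def)
  have "u = take ?m u @ drop ?m (take (length u - ?m) u) @ drop (length u - ?m) u"
    using False by (simp add: append_take_drop_take)
  then have "conjunct_lang (lc_gen (complement_grammar K \<Phi>))
      (CNT (take ?m (skeleton K u)) NAny (drop ?m (skeleton K u))) u"
    unfolding sk using lc_gen_NAny by auto
  then show ?thesis using sk(1) by (auto simp: skeleton_conjuncts_def)
qed

lemma derivable_complete:
  assumes K: "max_offset \<Phi> \<le> K" and "derivable w \<Phi> h x y"
    and "w = p @ u @ s" "x = length p + 1" "y = length p + length u"
  shows "lc_gen (complement_grammar K \<Phi>) (NDer h (lastn (Suc K) p) (take (Suc K) s)) u"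
  using assms(2-5)
proof (induction arbitrary: p u s rule: derivable.induct)
  case (derivableI body h x y)
  let ?G = "complement_grammar K \<Phi>"
  define lam where "lam = lastn (Suc K) p"
  define rho where "rho = take (Suc K) s"
  have u: "u \<noteq> []" using derivableI by auto
  have local: "local_body_holds lam (skeleton K u) rho body"
    using local_body_holds_iff[OF K derivableI.hyps(1) u] derivableI.hyps(5) derivableI.prems
    unfolding lam_def rho_def by simp
  obtain c where c: "c \<in> set (skeleton_conjuncts K (skeleton K u))" "conjunct_lang (lc_gen ?G) c u"
    using skeleton_conjuncts_complete[OF u] by blast
  have "length lam \<le> Suc K" "length rho \<le> Suc K"
    unfolding lam_def rho_def by (auto simp: length_lastn)
  note rule = der_rule_in_grammar[OF derivableI.hyps(1) this u local c(1)]
  have "conjunct_lang (lc_gen ?G) (rlit_conjunct K lam (skeleton K u) rho S a b) u"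
    if rb: "RLit S a b \<in> set body" for S a b
  proof -
    have ab: "a \<le> K" "b \<le> K" using lit_offset_le_max_offset[OF derivableI.hyps(1) rb] K by auto
    define u1 where "u1 = cut_left lam (skeleton K u) rho a"
    define u2 where "u2 = cut_right lam (skeleton K u) rho b"
    have "lit_holds (lam @ skeleton K u @ rho) all_true (length lam + 1)
        (length lam + length (skeleton K u)) (RLit S a b)"
      using local rb unfolding local_body_holds_def by blast
    note geometry = cut_geometry[OF derivableI.prems(1) lam_def rho_def u ab this, folded u1_def u2_def]
    obtain u' where uu: "u = u1 @ u' @ u2" using geometry(3) by blast
    have IH: "\<forall>p u s. w = p @ u @ s \<longrightarrow> shift (length w) x (int a) = length p + 1 \<longrightarrow>
        unshift (length w) y b = length p + length u \<longrightarrow>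
        lc_gen ?G (NDer (HRel S) (lastn (Suc K) p) (take (Suc K) s)) u"
      using derivableI.IH rb by blast
    have "lc_gen ?G (NDer (HRel S) (lastn (Suc K) (p @ u1)) (take (Suc K) (u2 @ s))) u'"
    proof (rule IH[rule_format])
      show "w = (p @ u1) @ u' @ u2 @ s" using derivableI.prems(1) uu by simp
      show "shift (length w) x (int a) = length (p @ u1) + 1"
        using geometry(1) derivableI.prems(1,2) by simp
      show "unshift (length w) y b = length (p @ u1) + length u'"
        using geometry(2) derivableI.prems(1,3) uu by simp
    qed
    then show ?thesis
      using context_append[OF lam_def[symmetric] rho_def[symmetric]] uu
      unfolding rlit_conjunct_def u1_def[symmetric] u2_def[symmetric] by auto
  qed
  then have "\<forall>c\<in>set (body_conjuncts K lam (skeleton K u) rho body). conjunct_lang (lc_gen ?G) c u"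
    unfolding set_body_conjuncts by blast
  then show ?case
    using lc_gen_intro[OF rule] c(2) unfolding lam_def rho_def by simp
qed

lemma start_rule_in_grammar:
  assumes "(A, cs) \<in> set (start_rules K)"
  shows "(A, cs) \<in> set (complement_grammar K \<Phi>)"
  using assms by (simp add: complement_grammar_def)

lemma NBotR_complete:
  assumes "lc_gen (complement_grammar K \<Phi>) (NDer HBot lam (take (Suc K) s)) u" "length lam \<le> Suc K"
  shows "lc_gen (complement_grammar K \<Phi>) (NBotR lam (take (Suc K) s)) (u @ s)"
proof -
  let ?G = "complement_grammar K \<Phi>" and ?rho = "take (Suc K) s"
  have rho: "length ?rho \<le> Suc K" by simp
  have "lc_gen ?G (NBotR lam ?rho) (u @ ?rho @ t)" if "t = [] \<or> length ?rho = Suc K" for t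
    using that
  proof (induction t rule: rev_induct)
    case Nil
    have "(NBotR lam ?rho, [CNT [] (NDer HBot lam ?rho) ?rho]) \<in> set ?G"
      using assms(2) rho by (intro start_rule_in_grammar) (auto simp: mem_start_rules)
    from lc_gen_unit_rule[OF this assms(1)] show ?case by simp
  next
    case (snoc a t)
    then have "(NBotR lam ?rho, [CNT [] (NBotR lam ?rho) [a]]) \<in> set ?G"
      using assms(2) by (intro start_rule_in_grammar) (auto simp: mem_start_rules)
    from lc_gen_unit_rule[OF this snoc.IH] snoc.prems show ?case by simp
  qed
  moreover have "drop (Suc K) s = [] \<or> length ?rho = Suc K" by auto
  ultimately show ?thesis by (metis append_take_drop_id)
qed

lemma NBotLR_complete:
  assumes "lc_gen (complement_grammar K \<Phi>) (NBotR (lastn (Suc K) p) rho) v" "length rho \<le> Suc K"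
  shows "lc_gen (complement_grammar K \<Phi>) (NBotLR (lastn (Suc K) p) rho) (p @ v)"
proof -
  let ?G = "complement_grammar K \<Phi>" and ?lam = "lastn (Suc K) p"
  have lam: "length ?lam \<le> Suc K" by (simp add: length_lastn)
  have "lc_gen ?G (NBotLR ?lam rho) (t @ ?lam @ v)" if "t = [] \<or> length ?lam = Suc K" for t
    using that
  proof (induction t)
    case Nil
    have "(NBotLR ?lam rho, [CNT ?lam (NBotR ?lam rho) []]) \<in> set ?G"
      using assms(2) lam by (intro start_rule_in_grammar) (auto simp: mem_start_rules)
    from lc_gen_unit_rule[OF this assms(1)] show ?case by simp
  next
    case (Cons a t)
    then have "(NBotLR ?lam rho, [CNT [a] (NBotLR ?lam rho) []]) \<in> set ?G"
      using assms(2) by (intro start_rule_in_grammar) (auto simp: mem_start_rules)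
    from lc_gen_unit_rule[OF this Cons.IH] Cons.prems show ?case by simp
  qed
  moreover have "take (length p - Suc K) p = [] \<or> length ?lam = Suc K"
    by (auto simp: length_lastn)
  ultimately show ?thesis by (metis append.assoc take_append_lastn)
qed

lemma NStart_complete:
  assumes K: "max_offset \<Phi> \<le> K" and d: "derivable w \<Phi> HBot x y"
  shows "lc_gen (complement_grammar K \<Phi>) NStart w"
proof -
  let ?G = "complement_grammar K \<Phi>"
  have r: "1 \<le> x" "x \<le> y" "y \<le> length w" using derivable_range[OF d] by auto
  define p where "p = take (x - 1) w"
  define u where "u = drop (x - 1) (take y w)"
  define s where "s = drop y w"
  have w: "w = p @ u @ s" unfolding p_def u_def s_def
    using append_take_drop_take[of "x - 1" y w] r by simp
  have "lc_gen ?G (NDer HBot (lastn (Suc K) p) (take (Suc K) s)) u"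
    using derivable_complete[OF K d w] r unfolding p_def u_def by simp
  then have "lc_gen ?G (NBotLR (lastn (Suc K) p) (take (Suc K) s)) (p @ u @ s)"
    by (intro NBotLR_complete NBotR_complete) (auto simp: length_lastn)
  moreover have "(NStart, [CNT [] (NBotLR (lastn (Suc K) p) (take (Suc K) s)) []]) \<in> set ?G"
    by (intro start_rule_in_grammar) (auto simp: mem_start_rules length_lastn)
  ultimately show ?thesis using lc_gen_unit_rule w by fastforce
qed

lemma complement_grammar_lang:
  assumes "max_offset \<Phi> \<le> K"
  shows "{w. lc_gen (complement_grammar K \<Phi>) NStart w} = {w. \<exists>x y. derivable w \<Phi> HBot x y}"
  using complement_grammar_sound[OF assms, of NStart] NStart_complete[OF assms] by auto

theorem lemma7:
  fixes L :: "('a :: finite) list set"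
  assumes "L \<subseteq> {w. w \<noteq> []}"
    and "L \<in> incl_ESO_HORN"
  shows "{w. w \<noteq> []} - L \<in> LinConj"
proof -
  obtain \<Phi> where L: "L = {w. w \<noteq> [] \<and> ihorn_models w \<Phi>}"
    using assms(2) unfolding incl_ESO_HORN_def by blast
  have "{w. w \<noteq> []} - L = {w. \<exists>x y. derivable w \<Phi> HBot x y}"
    using derivable_range unfolding L ihorn_models_iff_not_derivable by fastforce
  also have "\<dots> = {w. lc_gen (complement_grammar (max_offset \<Phi>) \<Phi>) NStart w}"
    using complement_grammar_lang[of \<Phi> "max_offset \<Phi>"] by simp
  finally show ?thesis using LinConj_countable by simp
qed

end
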